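(* For the complete graph $K_n$ with $n\ge 3$ vertices, $b_{OCD}(K_n)=1$ if $n=3$ and $b_{OCD}(K_n)=\lceil n/2\rceil$ if $n\ge 4$.
   Context: A set $S\subseteq V$ is a dominating set of a graph $G=(V,E)$ if every vertex not in $S$ is adjacent to a vertex of $S$. A set $\tilde D\subseteq V$ is an outer-connected dominating set of $G$ if $\tilde D$ is dominating and the induced subgraph $G[V\setminus\tilde D]$ is connected (the empty graph counts as connected). $\tilde\gamma_c(G)$ is the minimum size of an outer-connected dominating set. For a graph $G$ without isolated vertices, the outer-connected bondage number $b_{OCD}(G)$ is the minimum number of edges whose removal from $G$ yields a graph $G'$ with $\tilde\gamma_c(G')>\tilde\gamma_c(G)$. *)

theory Defs
  imports Complex_Main
begin

(* A simple graph is given by a vertex set V and an edge set E of 2-element subsets of V. *)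

definition adj :: "'a set set \<Rightarrow> 'a \<Rightarrow> 'a \<Rightarrow> bool" where
  "adj E x y \<longleftrightarrow> {x, y} \<in> E \<and> x \<noteq> y"

definition dominating :: "'a set \<Rightarrow> 'a set set \<Rightarrow> 'a set \<Rightarrow> bool" where
  "dominating V E S \<longleftrightarrow> S \<subseteq> V \<and> (\<forall>v \<in> V - S. \<exists>u \<in> S. adj E v u)"

(* the induced subgraph G[W] is connected (the empty graph counts as connected) *)
definition induced_connected :: "'a set set \<Rightarrow> 'a set \<Rightarrow> bool" where
  "induced_connected E W \<longleftrightarrow>
     (\<forall>x \<in> W. \<forall>y \<in> W. (x, y) \<in> {(u, v). u \<in> W \<and> v \<in> W \<and> adj E u v}\<^sup>*)"

definition outer_connected_dominating :: "'a set \<Rightarrow> 'a set set \<Rightarrow> 'a set \<Rightarrow> bool" where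
  "outer_connected_dominating V E D \<longleftrightarrow> dominating V E D \<and> induced_connected E (V - D)"

definition ocd_number :: "'a set \<Rightarrow> 'a set set \<Rightarrow> nat" where
  "ocd_number V E = (LEAST k. \<exists>D. outer_connected_dominating V E D \<and> card D = k)"

definition ocd_bondage :: "'a set \<Rightarrow> 'a set set \<Rightarrow> nat" where
  "ocd_bondage V E = (LEAST k. \<exists>F. F \<subseteq> E \<and> finite F \<and> card F = k \<and>
                                   ocd_number V (E - F) > ocd_number V E)"

definition complete_vertices :: "nat \<Rightarrow> nat set" where
  "complete_vertices n = {0..<n}"

definition complete_edges :: "nat \<Rightarrow> nat set set" where
  "complete_edges n = {e. e \<subseteq> {0..<n} \<and> card e = 2}"

end

theory Submission
  imports Defs
begin

text \<open>Any single vertex of \<open>K\<^sub>n\<close> is an outer-connected dominating set, so the bondage number of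
\<open>K\<^sub>n\<close> is the least number of edges whose removal leaves no outer-connected dominating singleton. Such a singleton \<open>{v}\<close> requires \<open>v\<close> to be untouched by the
removed edges; conversely an untouched vertex works when \<open>2|F| < n\<close> and \<open>|F| + 3 \<le> n\<close>, since two
vertices of \<open>K\<^sub>n - v\<close> joined by a removed edge have \<open>n - 3\<close> potential common neighbours, each
ruled out only by a further, distinct removed edge. An edge cover of size \<open>\<lceil>n/2\<rceil>\<close> attains the bound for
\<open>n \<ge> 4\<close>; for \<open>n = 3\<close> one removed edge already disconnects the complement of the third vertex.\<close>

lemma outer_connected_dominating_whole: "outer_connected_dominating V E V"
  by (simp add: outer_connected_dominating_def dominating_def induced_connected_def)

lemma ocd_number_eq_1_iff:
  assumes "finite V" "V \<noteq> {}"
  shows "ocd_number V E = 1 \<longleftrightarrow> (\<exists>v. outer_connected_dominating V E {v})"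
    and "ocd_number V E \<ge> 1"
proof -
  let ?P = "\<lambda>k. \<exists>D. outer_connected_dominating V E D \<and> card D = k"
  have "?P (ocd_number V E)" unfolding ocd_number_def
    by (rule LeastI[of ?P "card V"]) (use outer_connected_dominating_whole in blast)
  then obtain D where D: "outer_connected_dominating V E D" "card D = ocd_number V E" by blast
  have "D \<subseteq> V" "D \<noteq> {}"
    using D(1) assms(2) by (auto simp: outer_connected_dominating_def dominating_def)
  then show ge: "ocd_number V E \<ge> 1"
    using D(2) assms(1) by (metis Suc_leI card_gt_0_iff finite_subset One_nat_def)
  show "ocd_number V E = 1 \<longleftrightarrow> (\<exists>v. outer_connected_dominating V E {v})"
  proof
    assume "ocd_number V E = 1"
    with D show "\<exists>v. outer_connected_dominating V E {v}" by (metis card_1_singletonE)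
  next
    assume "\<exists>v. outer_connected_dominating V E {v}"
    then have "?P 1" by force
    then have "ocd_number V E \<le> 1" unfolding ocd_number_def by (rule Least_le)
    with ge show "ocd_number V E = 1" by simp
  qed
qed

lemma ocd_bondage_eqI:
  assumes "finite V" "V \<noteq> {}"
    and "\<exists>v. outer_connected_dominating V E {v}"
    and "F \<subseteq> E" "finite F" "card F = k" "\<nexists>v. outer_connected_dominating V (E - F) {v}"
    and "\<And>F. F \<subseteq> E \<Longrightarrow> finite F \<Longrightarrow> card F < k \<Longrightarrow> \<exists>v. outer_connected_dominating V (E - F) {v}"
  shows "ocd_bondage V E = k"
proof -
  have increased_iff: "ocd_number V (E - F') > ocd_number V E \<longleftrightarrow>
      (\<nexists>v. outer_connected_dominating V (E - F') {v})" for F'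
    using ocd_number_eq_1_iff[OF assms(1,2), of E] ocd_number_eq_1_iff[OF assms(1,2), of "E - F'"]
      assms(3) by auto
  show ?thesis
    unfolding ocd_bondage_def increased_iff
  proof (rule Least_equality)
    show "\<exists>F'. F' \<subseteq> E \<and> finite F' \<and> card F' = k \<and> (\<nexists>v. outer_connected_dominating V (E - F') {v})"
      using assms(4-7) by blast
  next
    show "k \<le> k'" if "\<exists>F'. F' \<subseteq> E \<and> finite F' \<and> card F' = k' \<and>
        (\<nexists>v. outer_connected_dominating V (E - F') {v})" for k'
      using that assms(8) not_le by blast
  qed
qed

lemma outer_connected_dominating_singleton_iff:
  "outer_connected_dominating V E {v} \<longleftrightarrow>
     v \<in> V \<and> (\<forall>u \<in> V - {v}. adj E u v) \<and> induced_connected E (V - {v})"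
  by (auto simp: outer_connected_dominating_def dominating_def)

lemma induced_connected_has_neighbour:
  assumes "induced_connected E W" "x \<in> W" "y \<in> W" "x \<noteq> y"
  shows "\<exists>z \<in> W. adj E x z"
proof -
  have "(x, y) \<in> {(u, v). u \<in> W \<and> v \<in> W \<and> adj E u v}\<^sup>*"
    using assms(1-3) unfolding induced_connected_def by blast
  then show ?thesis
    using assms(4) by (cases rule: converse_rtranclE) auto
qed

lemma induced_connected_almost_complete:
  assumes F: "finite F" "card F + 2 \<le> card W"
    and complete: "\<And>a b. a \<in> W \<Longrightarrow> b \<in> W \<Longrightarrow> a \<noteq> b \<Longrightarrow> {a, b} \<notin> F \<Longrightarrow> adj E a b"
  shows "induced_connected E W"
  unfolding induced_connected_def
proof (intro ballI)
  fix x y assume x: "x \<in> W" and y: "y \<in> W"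
  let ?R = "{(u, v). u \<in> W \<and> v \<in> W \<and> adj E u v}"
  have step: "(a, b) \<in> ?R" if "a \<in> W" "b \<in> W" "a \<noteq> b" "{a, b} \<notin> F" for a b
    using that complete by auto
  show "(x, y) \<in> ?R\<^sup>*"
  proof (cases "x = y \<or> {x, y} \<notin> F")
    case True
    then show ?thesis using step[OF x y] by auto
  next
    case False
    then have xy: "x \<noteq> y" "{x, y} \<in> F" by auto
    have "finite W" using F(2) card.infinite by fastforce
    define Z where "Z = W - {x, y}"
    have card_Z: "card Z = card W - 2"
      unfolding Z_def using x y xy \<open>finite W\<close> by (subst card_Diff_subset) auto
    define blocked where "blocked = {z \<in> Z. {x, z} \<in> F \<or> {z, y} \<in> F}"
    define witness where "witness z = (if {x, z} \<in> F then {x, z} else {z, y})" for z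
    have "inj_on witness blocked"
      unfolding inj_on_def witness_def blocked_def Z_def by (auto simp: doubleton_eq_iff)
    moreover have "witness ` blocked \<subseteq> F - {{x, y}}"
      unfolding witness_def blocked_def Z_def by (auto simp: doubleton_eq_iff)
    ultimately have "card blocked \<le> card (F - {{x, y}})"
      using F(1) by (metis card_image card_mono finite_Diff)
    also have "\<dots> < card Z"
    proof -
      have "card F > 0" using xy F(1) card_gt_0_iff by blast
      then show ?thesis using xy F card_Z by simp
    qed
    finally have "\<not> Z \<subseteq> blocked"
      using card_mono[of blocked Z] \<open>finite W\<close> unfolding blocked_def Z_def by auto
    then obtain z where z: "z \<in> Z" "z \<notin> blocked" by blast
    have "(x, z) \<in> ?R" "(z, y) \<in> ?R"
      using z x y step[of x z] step[of z y] unfolding Z_def blocked_def by auto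
    then show ?thesis by (meson converse_rtrancl_into_rtrancl r_into_rtrancl)
  qed
qed

lemma exists_vertex_not_covered:
  assumes "finite V" "finite F" "\<forall>e \<in> F. card e = 2" "2 * card F < card V"
  shows "\<exists>v \<in> V. v \<notin> \<Union>F"
proof -
  have "\<forall>e \<in> F. finite e" using assms(3) card.infinite by fastforce
  then have "card (\<Union>F) \<le> 2 * card F"
    using assms(3) card_Union_le_sum_card[of F] by simp
  then have "\<not> V \<subseteq> \<Union>F"
    using assms card_mono[of "\<Union>F" V] \<open>\<forall>e\<in>F. finite e\<close> by auto
  then show ?thesis by blast
qed

lemma adj_complete_edges_minus:
  "adj (complete_edges n - F) u v \<longleftrightarrow> u < n \<and> v < n \<and> u \<noteq> v \<and> {u, v} \<notin> F"
  by (auto simp: adj_def complete_edges_def card_insert_if)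

lemma singleton_ocd_complete_minus_iff:
  "outer_connected_dominating {0..<n} (complete_edges n - F) {v} \<longleftrightarrow>
     v < n \<and> (\<forall>u < n. u \<noteq> v \<longrightarrow> {u, v} \<notin> F)
     \<and> induced_connected (complete_edges n - F) ({0..<n} - {v})"
  unfolding outer_connected_dominating_singleton_iff adj_complete_edges_minus by auto

lemma singleton_ocd_complete_minus:
  assumes F: "F \<subseteq> complete_edges n" "finite F" "2 * card F < n" "card F + 3 \<le> n"
  shows "\<exists>v. outer_connected_dominating {0..<n} (complete_edges n - F) {v}"
proof -
  have "\<forall>e \<in> F. card e = 2" using F(1) by (auto simp: complete_edges_def)
  then obtain v where v: "v < n" "v \<notin> \<Union>F"
    using exists_vertex_not_covered[of "{0..<n}" F] F(2,3) by auto
  have "induced_connected (complete_edges n - F) ({0..<n} - {v})"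
    using F(2,4) v(1)
    by (intro induced_connected_almost_complete) (auto simp: adj_complete_edges_minus)
  then show ?thesis
    using v by (intro exI[of _ v]) (auto simp: singleton_ocd_complete_minus_iff)
qed

lemma singleton_ocd_complete:
  assumes "n \<ge> 3"
  shows "\<exists>v. outer_connected_dominating {0..<n} (complete_edges n) {v}"
  using singleton_ocd_complete_minus[of "{}" n] assms by simp

lemma no_singleton_ocd_K3:
  "\<nexists>v. outer_connected_dominating {0..<3} (complete_edges 3 - {{0, 1}}) {v}"
proof
  assume "\<exists>v. outer_connected_dominating {0..<3} (complete_edges 3 - {{0, 1}}) {v}"
  then obtain v where v: "v < 3" and dom: "\<forall>u < 3. u \<noteq> v \<longrightarrow> {u, v} \<noteq> {0, 1 :: nat}"
    and conn: "induced_connected (complete_edges 3 - {{0, 1}}) ({0..<3} - {v})"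
    unfolding singleton_ocd_complete_minus_iff by blast
  show False
  proof (cases "v = 2")
    case True
    then have "\<exists>z \<in> {0..<3} - {v}. adj (complete_edges 3 - {{0, 1}}) 0 z"
      by (intro induced_connected_has_neighbour[OF conn, of 0 1]) auto
    with True show False by (auto simp: adj_complete_edges_minus)
  next
    case False
    with v have "v = 0 \<or> v = 1" by auto
    with dom[rule_format, of "1 - v"] show False by (auto simp: doubleton_eq_iff)
  qed
qed

lemma no_singleton_ocd_of_edge_cover:
  assumes "\<forall>v < n. \<exists>u < n. u \<noteq> v \<and> {u, v} \<in> F"
  shows "\<nexists>v. outer_connected_dominating {0..<n} (complete_edges n - F) {v}"
  using assms unfolding singleton_ocd_complete_minus_iff by blast

text \<open>The cover pairs \<open>2i\<close> with \<open>2i + 1\<close>, and the last vertex with \<open>0\<close> when \<open>n\<close> is odd.\<close>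

lemma complete_edge_cover_exists:
  assumes "n \<ge> 2"
  shows "\<exists>F. F \<subseteq> complete_edges n \<and> card F = (n + 1) div 2 \<and>
           (\<forall>v < n. \<exists>u < n. u \<noteq> v \<and> {u, v} \<in> F)"
proof -
  define m where "m = (n + 1) div 2"
  define g where "g i = {2 * i, Suc (2 * i) mod n}" for i
  have even_lt: "2 * i < n" if "i < m" for i using that unfolding m_def by linarith
  have partner: "Suc (2 * i) mod n = (if Suc (2 * i) < n then Suc (2 * i) else 0)" if "i < m" for i
  proof -
    have "Suc (2 * i) < n \<or> Suc (2 * i) = n" using even_lt[OF that] by linarith
    then show ?thesis by auto
  qed
  have g_edge: "g i \<in> complete_edges n" if "i < m" for i
    using partner[OF that] even_lt[OF that] assms
    unfolding g_def complete_edges_def by (auto simp: card_insert_if)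
  have meets_other_only_at_zero: "i = 0" if "2 * i \<in> g j" "i \<noteq> j" "j < m" for i j
  proof -
    have "2 * i = Suc (2 * j) \<or> 2 * i = 0"
      using that partner[OF that(3)] unfolding g_def by (auto split: if_split_asm)
    then show ?thesis by presburger
  qed
  have "inj_on g {..<m}"
  proof (rule inj_onI)
    fix i j assume i: "i \<in> {..<m}" and j: "j \<in> {..<m}" and eq: "g i = g j"
    have "2 * i \<in> g j" "2 * j \<in> g i" using eq unfolding g_def by auto
    then show "i = j"
      using meets_other_only_at_zero i j by (metis lessThan_iff)
  qed
  then have "card (g ` {..<m}) = m" by (simp add: card_image)
  moreover have "\<exists>u < n. u \<noteq> v \<and> {u, v} \<in> g ` {..<m}" if v: "v < n" for v
  proof -
    have i: "v div 2 < m" using v unfolding m_def by linarith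
    show ?thesis
    proof (cases "even v")
      case True
      then have "{Suc v mod n, v} \<in> g ` {..<m}"
        using i imageI[of "v div 2" "{..<m}" g] unfolding g_def by (simp add: insert_commute)
      moreover have "Suc v mod n = (if Suc v < n then Suc v else 0)"
        using partner[OF i] True by simp
      ultimately show ?thesis
        using v assms by (intro exI[of _ "Suc v mod n"]) auto
    next
      case False
      then have "{v - 1, v} \<in> g ` {..<m}"
        using i imageI[of "v div 2" "{..<m}" g] v unfolding g_def by (auto elim!: oddE)
      then show ?thesis
        using v False by (intro exI[of _ "v - 1"]) (auto elim!: oddE)
    qed
  qed
  ultimately show ?thesis
    using g_edge m_def by (intro exI[of _ "g ` {..<m}"]) auto
qed

lemma nat_ceiling_half: "nat \<lceil>real n / 2\<rceil> = (n + 1) div 2"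
proof (cases "even n")
  case True
  then show ?thesis by (auto elim!: evenE)
next
  case False
  then obtain k where k: "n = 2 * k + 1" by (blast elim: oddE)
  have "\<lceil>real n / 2\<rceil> = int k + 1"
    unfolding k by (intro ceiling_unique) auto
  then show ?thesis using k by simp
qed

theorem mainTheorem8:
  fixes n :: nat
  assumes "n \<ge> 3"
  shows "ocd_bondage (complete_vertices n) (complete_edges n) =
           (if n = 3 then 1 else nat \<lceil>real n / 2\<rceil>)"
proof (cases "n = 3")
  case True
  have "{{0, 1}} \<subseteq> complete_edges 3" by (auto simp: complete_edges_def)
  then show ?thesis
    unfolding True complete_vertices_def
    by (intro ocd_bondage_eqI[where F = "{{0, 1}}"] no_singleton_ocd_K3 singleton_ocd_complete
        singleton_ocd_complete_minus) auto
next
  case False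
  then have "n \<ge> 4" using assms by simp
  obtain F where F: "F \<subseteq> complete_edges n" "card F = (n + 1) div 2"
    "\<forall>v < n. \<exists>u < n. u \<noteq> v \<and> {u, v} \<in> F"
    using complete_edge_cover_exists[of n] assms by auto
  have "finite F" using F(2) \<open>n \<ge> 4\<close> card.infinite by fastforce
  have small_removal_bounds: "2 * card F' < n" "card F' + 3 \<le> n" if "card F' < (n + 1) div 2" for F'
    using that \<open>n \<ge> 4\<close> by linarith+
  show ?thesis
    unfolding complete_vertices_def nat_ceiling_half if_not_P[OF False]
    using \<open>n \<ge> 4\<close> F \<open>finite F\<close> small_removal_bounds
    by (intro ocd_bondage_eqI[where F = F] no_singleton_ocd_of_edge_cover singleton_ocd_complete
        singleton_ocd_complete_minus) auto
qed

end
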